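(* Let $\kappa\in(8/3,8)$, $\alpha\in\mathbb R$ and $\mu$ a probability measure on $\mathbb R$. (i) If $\alpha=0$, then $\nu\mapsto\gamma_\kappa(\alpha,\nu)$ has a unique minimizer $\nu_0$ on $[0,\infty)$. (ii) If $\alpha>0$ and $\mu((0,\infty))>0$, or $\alpha<0$ and $\mu((-\infty,0))>0$, then $\nu\mapsto\gamma_\kappa(\alpha,\nu)$ has a unique minimizer $\nu_0$ on $[0,\infty)$, and $\nu_0>0$. (iii) If $\alpha>0$ and $\mu((0,\infty))=0$, or $\alpha<0$ and $\mu((-\infty,0))=0$, then $\gamma_\kappa(\alpha,\nu)=\infty$ for all $\nu\in[0,\infty)$.
   Context: Let $\Lambda_\mu(\lambda)=\log\int e^{\lambda x}\,d\mu(x)$, $\Lambda_\kappa(\lambda)=\log\big(-\cos(4\pi/\kappa)/\cos(\pi\sqrt{(1-4/\kappa)^2+8\lambda/\kappa})\big)$ for $\lambda<1-\frac2\kappa-\frac{3\kappa}{32}$ (with $\cos(\pi\sqrt{\cdot})=\cosh(\pi\sqrt{-\cdot})$ for negative argument) and $+\infty$ otherwise, and $\Lambda^\star(x)=\sup_\lambda(\lambda x-\Lambda(\lambda))$. Define $\gamma_\kappa(\alpha,\nu)=\nu\Lambda_\mu^\star(\alpha/\nu)+\nu\Lambda_\kappa^\star(1/\nu)$ for $\nu>0$; $\gamma_\kappa(\alpha,0)=\lim_{\nu'\downarrow0}\gamma_\kappa(\alpha,\nu')$ for $\alpha\neq0$; $\gamma_\kappa(0,0)=1-\frac2\kappa-\frac{3\kappa}{32}$.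 *)

theory Defs
  imports "HOL-Probability.Probability"
begin

definition Lambda_mu :: "real measure \<Rightarrow> real \<Rightarrow> ereal" where
  "Lambda_mu \<mu> l =
     (let I = (\<integral>\<^sup>+ x. ennreal (exp (l * x)) \<partial>\<mu>)
      in if I = \<infinity> then \<infinity> else ereal (ln (enn2real I)))"

definition cos_sqrt :: "real \<Rightarrow> real" where
  "cos_sqrt a = (if a \<ge> 0 then cos (pi * sqrt a) else cosh (pi * sqrt (- a)))"

definition Lambda_kappa :: "real \<Rightarrow> real \<Rightarrow> ereal" where
  "Lambda_kappa \<kappa> l =
     (if l < 1 - 2 / \<kappa> - 3 * \<kappa> / 32
      then ereal (ln (- cos (4 * pi / \<kappa>) /
                      cos_sqrt ((1 - 4 / \<kappa>)\<^sup>2 + 8 * l / \<kappa>)))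
      else \<infinity>)"

definition legendre :: "(real \<Rightarrow> ereal) \<Rightarrow> real \<Rightarrow> ereal" where
  "legendre \<Lambda> x = (SUP l. ereal (l * x) - \<Lambda> l)"

definition gamma_pos :: "real \<Rightarrow> real measure \<Rightarrow> real \<Rightarrow> real \<Rightarrow> ereal" where
  "gamma_pos \<kappa> \<mu> \<alpha> \<nu> =
     ereal \<nu> * legendre (Lambda_mu \<mu>) (\<alpha> / \<nu>)
     + ereal \<nu> * legendre (Lambda_kappa \<kappa>) (1 / \<nu>)"

definition gamma_kappa :: "real \<Rightarrow> real measure \<Rightarrow> real \<Rightarrow> real \<Rightarrow> ereal" where
  "gamma_kappa \<kappa> \<mu> \<alpha> \<nu> =
     (if \<nu> > 0 then gamma_pos \<kappa> \<mu> \<alpha> \<nu>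
      else if \<alpha> \<noteq> 0 then Lim (at_right 0) (gamma_pos \<kappa> \<mu> \<alpha>)
      else ereal (1 - 2 / \<kappa> - 3 * \<kappa> / 32))"

end

theory Submission
  imports Defs
begin

text \<open>
  For nu > 0 the perspective nu Lambda^*(y/nu) of a Legendre transform is the supremum
  over l of the affine functions nu \<mapsto> l y - nu Lambda(l). Hence on (0, \<infinity>)
    gamma_kappa(alpha, nu) = A(nu) + K(nu),
  A(nu) = sup_l (l alpha - nu Lambda_mu(l)),  K(nu) = sup_(m < m_c) (m - nu Lambda_kappa(m)),
  with m_c = 1 - 2/kappa - 3 kappa/32, and both summands are convex and lower semicontinuous
  in nu. Minimisation of gamma_kappa thus becomes a question about these two functions:
  \<^item> suprema of affine families: convexity, lower semicontinuity, existence of minima under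
    linear growth, right-continuity at 0, and the Legendre scaling identity;
  \<^item> K is finite on [0, \<infinity>), K(0) = m_c, it grows linearly, it is strictly convex (the supremum is
    attained, and the stationarity condition nu Lambda_kappa'(m) = 1 at a common maximiser cannot
    hold for two values of nu), and it has slope -\<infinity> at 0 since Lambda_kappa blows up at m_c;
    consequently A + K, for A \<ge> 0 a supremum of affine functions, has a unique minimiser, which
    is positive as soon as A is finite somewhere;
  \<^item> A \<ge> 0; if mu charges the side {x. alpha x > 0}, the barycenter of a bounded piece of it gives
    a linear lower bound for Lambda_mu making A finite at some nu > 0; if mu does not charge it,
    the Legendre transform of Lambda_mu is infinite at every alpha/nu.
  Finally gamma_kappa agrees with A + K on [0, \<infinity>) (at nu = 0 by right-continuity), which gives
  parts (i) and (ii); part (iii) follows from the last observation.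
\<close>

section \<open>Suprema of affine functions\<close>

text \<open>The pointwise supremum over a family I of the affine functions v \<mapsto> a i - v * b i.
  Every function of nu occurring in gamma_kappa has this form (see scaled_legendre).\<close>

definition sup_affine :: "'i set \<Rightarrow> ('i \<Rightarrow> real) \<Rightarrow> ('i \<Rightarrow> real) \<Rightarrow> real \<Rightarrow> ereal" where
  "sup_affine I a b v = (SUP i\<in>I. ereal (a i - v * b i))"

lemma sup_affine_upper: "i \<in> I \<Longrightarrow> ereal (a i - v * b i) \<le> sup_affine I a b v"
  unfolding sup_affine_def by (rule SUP_upper)

lemma sup_affine_least:
  "(\<And>i. i \<in> I \<Longrightarrow> ereal (a i - v * b i) \<le> y) \<Longrightarrow> sup_affine I a b v \<le> y"
  unfolding sup_affine_def by (rule SUP_least)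

lemma sup_affine_not_minf: "I \<noteq> {} \<Longrightarrow> sup_affine I a b v \<noteq> -\<infinity>"
  using sup_affine_upper[of _ I a v b] by fastforce

lemma sup_affine_cong:
  "I = J \<Longrightarrow> (\<And>i. i \<in> I \<Longrightarrow> a i = a' i) \<Longrightarrow> (\<And>i. i \<in> I \<Longrightarrow> b i = b' i) \<Longrightarrow>
   sup_affine I a b v = sup_affine J a' b' v"
  unfolding sup_affine_def by (intro SUP_cong) auto

lemma sup_affine_convex:
  assumes t: "0 \<le> t" "t \<le> 1"
  shows "sup_affine I a b ((1-t)*x + t*y) \<le> ereal (1-t) * sup_affine I a b x + ereal t * sup_affine I a b y"
proof (rule sup_affine_least)
  fix i assume i: "i \<in> I"
  have "ereal (a i - ((1-t)*x + t*y) * b i) = ereal (1-t) * ereal (a i - x * b i) + ereal t * ereal (a i - y * b i)"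
    by (simp add: algebra_simps)
  also have "\<dots> \<le> ereal (1-t) * sup_affine I a b x + ereal t * sup_affine I a b y"
    using t by (intro add_mono ereal_mult_left_mono sup_affine_upper i) auto
  finally show "ereal (a i - ((1-t)*x + t*y) * b i) \<le> \<dots>" .
qed

lemma sup_affine_lsc:
  assumes "(g \<longlongrightarrow> x) F" "F \<noteq> bot"
  shows "sup_affine I a b x \<le> Liminf F (\<lambda>n. sup_affine I a b (g n))"
  unfolding sup_affine_def[of I a b x]
proof (rule SUP_least)
  fix i assume i: "i \<in> I"
  have "((\<lambda>n. ereal (a i - g n * b i)) \<longlongrightarrow> ereal (a i - x * b i)) F"
    using assms(1) by (intro tendsto_intros)
  then have "ereal (a i - x * b i) = Liminf F (\<lambda>n. ereal (a i - g n * b i))"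
    by (rule lim_imp_Liminf[OF assms(2), symmetric])
  also have "\<dots> \<le> Liminf F (\<lambda>n. sup_affine I a b (g n))"
    by (intro Liminf_mono always_eventually allI sup_affine_upper i)
  finally show "ereal (a i - x * b i) \<le> \<dots>" .
qed

lemma sup_affine_add:
  assumes "I \<noteq> {}" "J \<noteq> {}"
  shows "sup_affine I a b v + sup_affine J c d v =
    sup_affine (I \<times> J) (\<lambda>p. a (fst p) + c (snd p)) (\<lambda>p. b (fst p) + d (snd p)) v"
proof -
  have "sup_affine I a b v + sup_affine J c d v = (SUP i\<in>I. ereal (a i - v * b i) + sup_affine J c d v)"
    unfolding sup_affine_def[of I]
    by (rule SUP_ereal_add_left[symmetric]) (use assms sup_affine_not_minf[OF assms(2)] in auto)
  also have "\<dots> = (SUP i\<in>I. SUP j\<in>J. ereal (a i - v * b i) + ereal (c j - v * d j))"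
    unfolding sup_affine_def using assms(2) by (intro SUP_cong refl SUP_ereal_add_right[symmetric]) auto
  also have "\<dots> = (SUP p\<in>I \<times> J. ereal ((a (fst p) + c (snd p)) - v * (b (fst p) + d (snd p))))"
    by (rule antisym) (force intro!: SUP_least intro: SUP_upper2 simp: algebra_simps)+
  finally show ?thesis unfolding sup_affine_def .
qed

text \<open>A sequentially lower semicontinuous function attains its minimum on a nonempty compact
  set: take a minimising sequence and a convergent subsequence.\<close>

lemma lsc_attains_min:
  fixes f :: "'a::metric_space \<Rightarrow> ereal"
  assumes lsc: "\<And>x (g::nat \<Rightarrow> 'a). g \<longlonglongrightarrow> x \<Longrightarrow> f x \<le> liminf (\<lambda>n. f (g n))"
    and S: "compact S" "S \<noteq> {}"
  shows "\<exists>x\<in>S. \<forall>y\<in>S. f x \<le> f y"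
proof -
  obtain c where c: "decseq c" "range c \<subseteq> f ` S" "Inf (f ` S) = (INF n. c n)"
    using Inf_countable_INF[of "f ` S"] S(2) by blast
  then have "\<forall>n. \<exists>x\<in>S. f x = c n"
    by (metis image_iff rangeI subsetD)
  then obtain g where g: "\<And>n. g n \<in> S" "\<And>n. f (g n) = c n"
    by metis
  obtain x r where x: "x \<in> S" "strict_mono r" "(g \<circ> r) \<longlonglongrightarrow> x"
    using compact_imp_seq_compact[OF S(1)] g(1) unfolding seq_compact_def by blast
  have "c \<longlonglongrightarrow> Inf (f ` S)"
    unfolding c(3) by (rule LIMSEQ_INF[OF c(1)])
  then have "(\<lambda>n. f ((g \<circ> r) n)) \<longlonglongrightarrow> Inf (f ` S)"
    using LIMSEQ_subseq_LIMSEQ[OF _ x(2)] g(2) by (simp add: comp_def)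
  then have "f x \<le> Inf (f ` S)"
    using lsc[OF x(3)] by (simp add: lim_imp_Liminf)
  then show ?thesis
    using x(1) by (meson INF_lower order_trans)
qed

text \<open>A supremum of affine functions that is finite somewhere and grows at least linearly attains
  its minimum on [0, \<infinity>): outside a large interval it exceeds its value at a finite point.\<close>

lemma sup_affine_attains_min:
  assumes grow: "\<And>v. 0 \<le> v \<Longrightarrow> ereal (c + d * v) \<le> sup_affine I a b v" and d: "d > 0"
    and fin: "0 \<le> vs" "sup_affine I a b vs \<noteq> \<infinity>"
  shows "\<exists>v0\<ge>0. \<forall>v\<ge>0. sup_affine I a b v0 \<le> sup_affine I a b v"
proof -
  let ?f = "sup_affine I a b"
  obtain hs where hs: "?f vs = ereal hs"
    using fin grow[of vs] by (cases "?f vs") auto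
  define R where "R = max vs ((hs - c) / d + 1)"
  have beyond: "?f vs < ?f v" if "R < v" for v
  proof -
    have "hs < c + d * v"
      using that d by (simp add: R_def field_simps)
    then show ?thesis
      using grow[of v] that fin(1) hs by (simp add: R_def) (meson ereal_less_eq(3) less_ereal.simps(1) less_le_trans)
  qed
  have "\<exists>x\<in>{0..R}. \<forall>y\<in>{0..R}. ?f x \<le> ?f y"
    by (rule lsc_attains_min) (use fin(1) in \<open>auto intro: sup_affine_lsc simp: R_def\<close>)
  then obtain v0 where v0: "v0 \<in> {0..R}" "\<And>y. y \<in> {0..R} \<Longrightarrow> ?f v0 \<le> ?f y"
    by blast
  have "?f v0 \<le> ?f v" if "0 \<le> v" for v
  proof (cases "v \<le> R")
    case False
    have "?f v0 \<le> ?f vs"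
      using v0(2) fin(1) by (simp add: R_def)
    also have "\<dots> < ?f v"
      using beyond False by simp
    finally show ?thesis by simp
  qed (use v0 that in auto)
  then show ?thesis using v0(1) by auto
qed

text \<open>Right-continuity at 0: lower semicontinuity gives the lower bound, and convexity bounds
  the function by the chord to a point v1 where it is finite.\<close>

lemma sup_affine_tendsto_at_0:
  assumes I: "I \<noteq> {}" and v1: "0 < v1" "sup_affine I a b v1 \<noteq> \<infinity>"
  shows "(sup_affine I a b \<longlongrightarrow> sup_affine I a b 0) (at_right 0)"
proof -
  let ?f = "sup_affine I a b"
  have ntriv: "at_right (0::real) \<noteq> bot" by simp
  have lower: "?f 0 \<le> Liminf (at_right 0) ?f"
    using sup_affine_lsc[of "\<lambda>v. v" 0 "at_right 0" I a b] by (simp add: tendsto_ident_at)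
  have upper: "Limsup (at_right 0) ?f \<le> ?f 0"
  proof (cases "?f 0 = \<infinity>")
    case False
    obtain h0 h1 where h: "?f 0 = ereal h0" "?f v1 = ereal h1"
      using False v1(2) sup_affine_not_minf[OF I] by (metis ereal_cases)
    have "eventually (\<lambda>v. ?f v \<le> ereal ((1 - v / v1) * h0 + v / v1 * h1)) (at_right 0)"
      unfolding eventually_at_right_field
    proof (intro exI[of _ v1] conjI allI impI)
      fix v :: real assume v: "0 < v" "v < v1"
      have "?f v = ?f ((1 - v/v1) * 0 + (v/v1) * v1)"
        using v1 by simp
      also have "\<dots> \<le> ereal (1 - v/v1) * ?f 0 + ereal (v/v1) * ?f v1"
        using v v1 by (intro sup_affine_convex) auto
      finally show "?f v \<le> ereal ((1 - v / v1) * h0 + v / v1 * h1)"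
        by (simp add: h)
    qed (use v1 in simp)
    then have "Limsup (at_right 0) ?f \<le> Limsup (at_right 0) (\<lambda>v. ereal ((1 - v / v1) * h0 + v / v1 * h1))"
      by (rule Limsup_mono)
    also have "\<dots> = ereal h0"
      by (rule lim_imp_Limsup[OF ntriv])
        (use v1 in \<open>auto intro!: tendsto_eq_intros simp: tendsto_ident_at\<close>)
    finally show ?thesis using h by simp
  qed simp
  show ?thesis
    using lower upper Liminf_le_Limsup[OF ntriv, of ?f]
    by (intro Liminf_eq_Limsup ntriv) auto
qed

lemma scaled_legendre:
  fixes \<Lambda> :: "real \<Rightarrow> ereal"
  assumes nm: "\<And>l. \<Lambda> l \<noteq> -\<infinity>" and v: "0 < v"
  shows "ereal v * legendre \<Lambda> (y / v)
    = sup_affine {l. \<Lambda> l \<noteq> \<infinity>} (\<lambda>l. l * y) (\<lambda>l. real_of_ereal (\<Lambda> l)) v"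
    (is "?L = ?R")
proof (rule antisym)
  have "ereal (l * (y / v)) - \<Lambda> l \<le> ereal (1/v) * ?R" for l
  proof (cases "\<Lambda> l")
    case (real r)
    have "ereal (l * (y / v)) - \<Lambda> l = ereal (1/v) * ereal (l * y - v * r)"
      using real v by (simp add: field_simps)
    also have "\<dots> \<le> ereal (1/v) * ?R"
      using real v sup_affine_upper[of l "{l. \<Lambda> l \<noteq> \<infinity>}" "\<lambda>l. l * y" v "\<lambda>l. real_of_ereal (\<Lambda> l)"]
      by (intro ereal_mult_left_mono) auto
    finally show ?thesis .
  qed (use nm in auto)
  then have "legendre \<Lambda> (y / v) \<le> ereal (1/v) * ?R"
    unfolding legendre_def by (rule SUP_least)
  then have "?L \<le> ereal v * (ereal (1/v) * ?R)"
    using v by (intro ereal_mult_left_mono) auto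
  also have "\<dots> = ?R"
    using v by (simp add: mult.assoc[symmetric])
  finally show "?L \<le> ?R" .
next
  show "?R \<le> ?L"
  proof (rule sup_affine_least)
    fix l assume "l \<in> {l. \<Lambda> l \<noteq> \<infinity>}"
    then obtain r where r: "\<Lambda> l = ereal r"
      using nm[of l] by (cases "\<Lambda> l") auto
    have "ereal (l * y - v * real_of_ereal (\<Lambda> l)) = ereal v * (ereal (l * (y / v)) - \<Lambda> l)"
      using r v by (simp add: field_simps)
    also have "\<dots> \<le> ?L"
      unfolding legendre_def using v by (intro ereal_mult_left_mono SUP_upper) auto
    finally show "ereal (l * y - v * real_of_ereal (\<Lambda> l)) \<le> ?L" .
  qed
qed

section \<open>The function cos(pi sqrt t)\<close>

text \<open>cos_sqrt is the entire function with Taylor coefficients (-1)^n pi^(2n) / (2n)!; this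
  gives its derivative everywhere, including across t = 0 where the two defining formulas meet.\<close>

definition cos_sqrt_coef :: "nat \<Rightarrow> real" where
  "cos_sqrt_coef n = (-1)^n * pi^(2*n) / fact (2*n)"

lemma cosh_paired: "(\<lambda>n. 1 / fact (2 * n) * x ^ (2 * n)) sums cosh (x::real)"
proof -
  have "(\<lambda>n. \<Sum>k = n * 2..<n * 2 + 2. (if even k then x ^ k /\<^sub>R fact k else 0)) sums cosh x"
    by (rule sums_group) (use cosh_converges [of x] in auto)
  then show ?thesis
    by (simp add: ac_simps divide_inverse)
qed

lemma cos_sqrt_sums: "(\<lambda>n. cos_sqrt_coef n * t^n) sums cos_sqrt t"
proof (cases "t \<ge> 0")
  case True
  have "(pi * sqrt t) ^ (2 * n) = pi^(2*n) * t^n" for n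
    using True by (simp add: power_mult power_mult_distrib)
  then show ?thesis
    using cos_paired[of "pi * sqrt t"] True by (simp add: cos_sqrt_def cos_sqrt_coef_def mult.assoc)
next
  case False
  have "1 / fact (2 * n) * (pi * sqrt (-t)) ^ (2 * n) = cos_sqrt_coef n * t^n" for n
    using False by (simp add: power_mult power_mult_distrib cos_sqrt_coef_def power_minus')
  then show ?thesis
    using cosh_paired[of "pi * sqrt (-t)"] False by (simp add: cos_sqrt_def)
qed

definition cos_sqrt_deriv :: "real \<Rightarrow> real" where
  "cos_sqrt_deriv t = (\<Sum>n. diffs cos_sqrt_coef n * t^n)"

lemma cos_sqrt_has_derivative: "(cos_sqrt has_real_derivative cos_sqrt_deriv t) (at t)"
proof -
  have eq: "cos_sqrt = (\<lambda>t. \<Sum>n. cos_sqrt_coef n * t^n)"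
    using cos_sqrt_sums sums_unique by blast
  have "\<And>y. summable (\<lambda>n. cos_sqrt_coef n * y ^ n)"
    using cos_sqrt_sums sums_summable by blast
  from termdiffs_strong_converges_everywhere[OF this]
  show ?thesis
    unfolding cos_sqrt_deriv_def eq .
qed

lemma cos_sqrt_pos: "t < 1/4 \<Longrightarrow> 0 < cos_sqrt t"
proof (cases "0 \<le> t")
  case True
  assume "t < 1/4"
  have "sqrt t < sqrt (1/4)"
    using True \<open>t < 1/4\<close> by (simp add: real_sqrt_less_iff)
  then have "pi * sqrt t < pi/2"
    by (simp add: real_sqrt_divide)
  moreover have "0 \<le> pi * sqrt t"
    using True by simp
  ultimately have "0 < cos (pi * sqrt t)"
    using pi_gt_zero by (intro cos_gt_zero_pi) linarith+
  then show ?thesis using True by (simp add: cos_sqrt_def)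
qed (simp add: cos_sqrt_def)

text \<open>An exponential upper bound, used for large negative t (where cos_sqrt is a cosh):
  it shows that Lambda_kappa grows at least linearly at -\<infinity>.\<close>

lemma cos_sqrt_le_exp:
  assumes "0 < e" "e \<le> 1" "t < 1/4"
  shows "cos_sqrt t \<le> exp (pi\<^sup>2 / (4*e) - e * t)"
proof (cases "0 \<le> t")
  case True
  have "(3::real)^2/4 \<le> pi\<^sup>2/4"
    using pi_gt3 by (intro divide_right_mono power_mono) auto
  also have "\<dots> \<le> pi\<^sup>2 / (4*e)"
    using assms by (simp add: divide_simps)
  finally have "e * t \<le> pi\<^sup>2 / (4*e)"
    using assms True mult_right_mono[of e 1 t] by simp
  then have "cos (pi * sqrt t) \<le> exp (pi\<^sup>2 / (4*e) - e * t)"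
    using cos_le_one[of "pi * sqrt t"] by (simp add: order_trans[OF _ one_le_exp_iff[THEN iffD2]])
  then show ?thesis using True by (simp add: cos_sqrt_def)
next
  case False
  define s where "s = sqrt (-t)"
  have s0: "0 \<le> s" and s2: "s^2 = -t"
    using False by (auto simp: s_def)
  have "0 \<le> (e * s - pi / 2)^2 / e"
    using assms by simp
  also have "\<dots> = e * s^2 - pi * s + pi\<^sup>2 / (4*e)"
    using assms by (simp add: power2_eq_square field_simps)
  finally have key: "pi * s \<le> pi\<^sup>2 / (4*e) - e * t"
    using s2 by simp
  have "cosh (pi * s) \<le> exp (pi * s)"
    using s0 by (simp add: cosh_def)
  also have "\<dots> \<le> exp (pi\<^sup>2 / (4*e) - e * t)"
    using key by simp
  finally show ?thesis using False by (simp add: cos_sqrt_def s_def)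
qed

text \<open>Near the zero 1/4, cos_sqrt vanishes at most linearly; hence Lambda_kappa blows up at the
  critical point.\<close>

lemma cos_sqrt_le_linear:
  assumes "0 \<le> t" "t \<le> 1/4"
  shows "cos_sqrt t \<le> 2 * pi * (1/4 - t)"
proof -
  define s where "s = sqrt t"
  have s0: "0 \<le> s" and s2: "s^2 = t"
    using assms by (auto simp: s_def)
  have s1: "s \<le> 1/2"
    using assms real_sqrt_le_mono[of t "1/4"] by (simp add: s_def real_sqrt_divide)
  have "cos_sqrt t = sin (pi/2 - pi * s)"
    using assms by (simp add: cos_sqrt_def s_def cos_sin_eq)
  also have "\<dots> \<le> pi * (1/2 - s)"
    using s1 sin_x_le_x[of "pi/2 - pi * s"] by (simp add: algebra_simps)
  also have "\<dots> \<le> 2 * pi * (1/4 - t)"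
    using s0 s1 s2 mult_right_mono[of "2 * s" 1 s] by (simp add: power2_eq_square algebra_simps)
  finally show ?thesis .
qed

section \<open>The SLE part Lambda_kappa\<close>

definition kappa_const :: "real \<Rightarrow> real" where
  "kappa_const \<kappa> = - cos (4 * pi / \<kappa>)"

definition kappa_crit :: "real \<Rightarrow> real" where
  "kappa_crit \<kappa> = 1 - 2 / \<kappa> - 3 * \<kappa> / 32"

definition kappa_arg :: "real \<Rightarrow> real \<Rightarrow> real" where
  "kappa_arg \<kappa> m = (1 - 4 / \<kappa>)\<^sup>2 + 8 * m / \<kappa>"

definition Lk :: "real \<Rightarrow> real \<Rightarrow> real" where
  "Lk \<kappa> m = ln (kappa_const \<kappa>) - ln (cos_sqrt (kappa_arg \<kappa> m))"

definition Lk_deriv :: "real \<Rightarrow> real \<Rightarrow> real" where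
  "Lk_deriv \<kappa> m = - 8 / \<kappa> * cos_sqrt_deriv (kappa_arg \<kappa> m) / cos_sqrt (kappa_arg \<kappa> m)"

text \<open>The second summand of gamma_kappa as a function of nu (by scaled_legendre).\<close>

abbreviation kappa_part :: "real \<Rightarrow> real \<Rightarrow> ereal" where
  "kappa_part \<kappa> \<equiv> sup_affine {..<kappa_crit \<kappa>} (\<lambda>m. m) (Lk \<kappa>)"

context
  fixes \<kappa> :: real
  assumes \<kappa>_range: "8/3 < \<kappa>" "\<kappa> < 8"
begin

lemma kappa_pos: "0 < \<kappa>"
  using \<kappa>_range by simp

lemma kappa_const_pos: "0 < kappa_const \<kappa>"
proof -
  have "pi/2 < 4*pi/\<kappa>" "4*pi/\<kappa> < 3*pi/2"
    using kappa_pos \<kappa>_range by (simp_all add: field_simps)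
  then have "0 < cos (4*pi/\<kappa> - pi)"
    by (intro cos_gt_zero_pi) auto
  then show ?thesis by (simp add: kappa_const_def)
qed

lemma kappa_const_le_1: "kappa_const \<kappa> \<le> 1"
  using cos_ge_minus_one[of "4*pi/\<kappa>"] unfolding kappa_const_def by linarith

lemma kappa_crit_pos: "0 < kappa_crit \<kappa>"
proof -
  have "0 < 3 * (\<kappa> - 8/3) * (8 - \<kappa>) / (32 * \<kappa>)"
    using \<kappa>_range by simp
  also have "\<dots> = kappa_crit \<kappa>"
    using kappa_pos by (simp add: kappa_crit_def field_simps)
  finally show ?thesis .
qed

lemma quarter_minus_kappa_arg: "1/4 - kappa_arg \<kappa> m = 8 * (kappa_crit \<kappa> - m) / \<kappa>"
  using kappa_pos by (simp add: kappa_arg_def kappa_crit_def field_simps power2_eq_square)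

lemma kappa_arg_less:
  assumes "m < kappa_crit \<kappa>"
  shows "kappa_arg \<kappa> m < 1/4"
proof -
  have "0 < 8 * (kappa_crit \<kappa> - m) / \<kappa>"
    using assms kappa_pos by simp
  then show ?thesis
    using quarter_minus_kappa_arg[of m] by linarith
qed

lemma Lambda_kappa_eq:
  assumes "m < kappa_crit \<kappa>"
  shows "Lambda_kappa \<kappa> m = ereal (Lk \<kappa> m)"
proof -
  have "- cos (4 * pi / \<kappa>) / cos_sqrt ((1 - 4 / \<kappa>)\<^sup>2 + 8 * m / \<kappa>)
      = kappa_const \<kappa> / cos_sqrt (kappa_arg \<kappa> m)"
    by (simp add: kappa_const_def kappa_arg_def)
  then show ?thesis
    using assms cos_sqrt_pos[OF kappa_arg_less[OF assms]] kappa_const_pos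
    by (simp add: Lambda_kappa_def Lk_def kappa_crit_def ln_div)
qed

lemma Lambda_kappa_infinite: "kappa_crit \<kappa> \<le> m \<Longrightarrow> Lambda_kappa \<kappa> m = \<infinity>"
  by (simp add: Lambda_kappa_def kappa_crit_def)

lemma Lk_lower:
  assumes "0 < e" "e \<le> 1" "m < kappa_crit \<kappa>"
  shows "ln (kappa_const \<kappa>) - pi\<^sup>2 / (4*e) + e * kappa_arg \<kappa> m \<le> Lk \<kappa> m"
proof -
  have "ln (cos_sqrt (kappa_arg \<kappa> m)) \<le> pi\<^sup>2 / (4*e) - e * kappa_arg \<kappa> m"
    using ln_le_cancel_iff[OF cos_sqrt_pos[OF kappa_arg_less[OF assms(3)]] exp_gt_zero]
      cos_sqrt_le_exp[OF assms(1,2) kappa_arg_less[OF assms(3)]]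
    by simp
  then show ?thesis by (simp add: Lk_def)
qed

lemma Lk_near_crit:
  assumes "0 \<le> kappa_arg \<kappa> m" "m < kappa_crit \<kappa>"
  shows "ln (kappa_const \<kappa>) - ln (16 * pi * (kappa_crit \<kappa> - m) / \<kappa>) \<le> Lk \<kappa> m"
proof -
  have "cos_sqrt (kappa_arg \<kappa> m) \<le> 2 * pi * (1/4 - kappa_arg \<kappa> m)"
    using cos_sqrt_le_linear assms kappa_arg_less[OF assms(2)] by simp
  also have "\<dots> = 16 * pi * (kappa_crit \<kappa> - m) / \<kappa>"
    by (simp add: quarter_minus_kappa_arg)
  finally show ?thesis
    using cos_sqrt_pos[OF kappa_arg_less[OF assms(2)]] by (simp add: Lk_def)
qed

lemma Lk_unbounded:
  "\<exists>U < kappa_crit \<kappa>. \<forall>m. U \<le> m \<longrightarrow> m < kappa_crit \<kappa> \<longrightarrow> T \<le> Lk \<kappa> m"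
proof -
  define m1 where "m1 = kappa_crit \<kappa> - \<kappa> / 32"
  have m1_arg: "0 \<le> kappa_arg \<kappa> m" if "m1 \<le> m" for m
  proof -
    have "8 * (kappa_crit \<kappa> - m) / \<kappa> \<le> 1/4"
      using that kappa_pos by (simp add: m1_def field_simps)
    then show ?thesis
      using quarter_minus_kappa_arg[of m] by linarith
  qed
  have "m1 < kappa_crit \<kappa>"
    using kappa_pos by (simp add: m1_def)
  define E where "E = exp (ln (kappa_const \<kappa>) - T)"
  define U where "U = max m1 (kappa_crit \<kappa> - \<kappa> * E / (16 * pi))"
  have "U < kappa_crit \<kappa>"
    using \<open>m1 < kappa_crit \<kappa>\<close> kappa_pos by (simp add: U_def E_def)
  moreover have "T \<le> Lk \<kappa> m" if m: "U \<le> m" "m < kappa_crit \<kappa>" for m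
  proof -
    have "16 * pi * (kappa_crit \<kappa> - m) / \<kappa> \<le> E"
      using m kappa_pos by (simp add: U_def field_simps)
    moreover have "0 < 16 * pi * (kappa_crit \<kappa> - m) / \<kappa>"
      using m kappa_pos by simp
    ultimately have "ln (16 * pi * (kappa_crit \<kappa> - m) / \<kappa>) \<le> ln (kappa_const \<kappa>) - T"
      using ln_le_cancel_iff[of _ E] by (simp add: E_def)
    then show ?thesis
      using Lk_near_crit[OF m1_arg m(2)] m by (simp add: U_def)
  qed
  ultimately show ?thesis by blast
qed

text \<open>Lk takes a negative value (where kappa_arg = -1, so cos_sqrt = cosh pi > 1);
  this makes kappa_part grow linearly.\<close>

lemma Lk_negative: "\<exists>m0 < kappa_crit \<kappa>. Lk \<kappa> m0 < 0"
proof (intro exI conjI)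
  define m0 where "m0 = - \<kappa> * ((1 - 4 / \<kappa>)\<^sup>2 + 1) / 8"
  have "0 < \<kappa> * ((1 - 4 / \<kappa>)\<^sup>2 + 1)"
    using kappa_pos by (simp add: add_nonneg_pos)
  then show "m0 < kappa_crit \<kappa>"
    using kappa_crit_pos by (simp add: m0_def)
  have "kappa_arg \<kappa> m0 = -1"
    using kappa_pos by (simp add: m0_def kappa_arg_def field_simps)
  then have "cos_sqrt (kappa_arg \<kappa> m0) = cosh pi"
    by (simp add: cos_sqrt_def)
  moreover have "1 < cosh pi"
    using cosh_real_nonneg_less_iff[of 0 pi] pi_gt_zero by simp
  ultimately show "Lk \<kappa> m0 < 0"
    using kappa_const_pos kappa_const_le_1 by (simp add: Lk_def)
qed

lemma Lk_has_derivative: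
  assumes "m < kappa_crit \<kappa>"
  shows "(Lk \<kappa> has_real_derivative Lk_deriv \<kappa> m) (at m)"
proof -
  have pos: "0 < cos_sqrt (kappa_arg \<kappa> m)"
    using cos_sqrt_pos[OF kappa_arg_less[OF assms]] .
  have arg: "(kappa_arg \<kappa> has_real_derivative 8 / \<kappa>) (at m)"
    unfolding kappa_arg_def using kappa_pos by (auto intro!: derivative_eq_intros)
  have "((\<lambda>m. cos_sqrt (kappa_arg \<kappa> m)) has_real_derivative
      cos_sqrt_deriv (kappa_arg \<kappa> m) * (8 / \<kappa>)) (at m)"
    using DERIV_chain2[OF cos_sqrt_has_derivative arg] .
  from DERIV_chain2[OF DERIV_ln_divide[OF pos] this]
  have "((\<lambda>m. ln (kappa_const \<kappa>) - ln (cos_sqrt (kappa_arg \<kappa> m))) has_real_derivative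
      0 - 1 / cos_sqrt (kappa_arg \<kappa> m) * (cos_sqrt_deriv (kappa_arg \<kappa> m) * (8 / \<kappa>))) (at m)"
    by (intro DERIV_diff DERIV_const)
  then show ?thesis
    unfolding Lk_def[abs_def] Lk_deriv_def by (simp add: field_simps)
qed

lemma Lk_continuous: "continuous_on {..<kappa_crit \<kappa>} (Lk \<kappa>)"
  using Lk_has_derivative by (meson DERIV_isCont continuous_at_imp_continuous_on lessThan_iff)

lemma affine_majorant:
  assumes "0 \<le> v" "0 < e" "e \<le> 1" "m < kappa_crit \<kappa>"
  shows "m - v * Lk \<kappa> m
    \<le> (1 - 8 * e * v / \<kappa>) * m + v * (pi\<^sup>2 / (4*e) - ln (kappa_const \<kappa>) - e * (1 - 4 / \<kappa>)\<^sup>2)"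
proof -
  have "m - v * Lk \<kappa> m \<le> m - v * (ln (kappa_const \<kappa>) - pi\<^sup>2 / (4*e) + e * kappa_arg \<kappa> m)"
    using Lk_lower[OF assms(2-4)] assms(1) by (simp add: mult_left_mono)
  then show ?thesis
    by (simp add: kappa_arg_def algebra_simps)
qed

lemma kappa_part_not_minf: "kappa_part \<kappa> v \<noteq> -\<infinity>"
  by (rule sup_affine_not_minf) (use kappa_crit_pos in \<open>auto intro!: exI[of _ 0]\<close>)

lemma kappa_part_finite:
  assumes v: "0 \<le> v"
  shows "kappa_part \<kappa> v \<noteq> \<infinity>"
proof -
  define e where "e = min 1 (\<kappa> / (8 * v + 1))"
  have e: "0 < e" "e \<le> 1"
    using v kappa_pos by (auto simp: e_def)
  have "e \<le> \<kappa> / (8 * v + 1)"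
    by (simp add: e_def)
  then have "e * (8 * v + 1) \<le> \<kappa>"
    using v by (simp add: pos_le_divide_eq)
  then have r: "0 \<le> 1 - 8 * e * v / \<kappa>"
    using e kappa_pos by (simp add: field_simps)
  define Q where "Q = pi\<^sup>2 / (4*e) - ln (kappa_const \<kappa>) - e * (1 - 4 / \<kappa>)\<^sup>2"
  have "kappa_part \<kappa> v \<le> ereal ((1 - 8 * e * v / \<kappa>) * kappa_crit \<kappa> + v * Q)"
  proof (rule sup_affine_least)
    fix m assume "m \<in> {..<kappa_crit \<kappa>}"
    then have m: "m < kappa_crit \<kappa>" by simp
    have "m - v * Lk \<kappa> m \<le> (1 - 8 * e * v / \<kappa>) * m + v * Q"
      using affine_majorant[OF v e m] by (simp add: Q_def)
    also have "\<dots> \<le> (1 - 8 * e * v / \<kappa>) * kappa_crit \<kappa> + v * Q"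
      using r m by (simp add: mult_left_mono)
    finally show "ereal (m - v * Lk \<kappa> m) \<le> ereal ((1 - 8 * e * v / \<kappa>) * kappa_crit \<kappa> + v * Q)"
      by simp
  qed
  then show ?thesis by auto
qed

lemma kappa_part_zero: "kappa_part \<kappa> 0 = ereal (kappa_crit \<kappa>)"
proof (rule antisym)
  show "kappa_part \<kappa> 0 \<le> ereal (kappa_crit \<kappa>)"
    by (rule sup_affine_least) auto
  show "ereal (kappa_crit \<kappa>) \<le> kappa_part \<kappa> 0"
  proof (rule dense_le)
    fix w assume w: "w < ereal (kappa_crit \<kappa>)"
    show "w \<le> kappa_part \<kappa> 0"
    proof (cases w)
      case (real r)
      then show ?thesis
        using w sup_affine_upper[of r "{..<kappa_crit \<kappa>}" "\<lambda>m. m" 0 "Lk \<kappa>"] by simp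
    qed (use w in auto)
  qed
qed

lemma kappa_part_grows: "\<exists>c d. 0 < d \<and> (\<forall>v. ereal (c + d * v) \<le> kappa_part \<kappa> v)"
proof -
  obtain m0 where m0: "m0 < kappa_crit \<kappa>" "Lk \<kappa> m0 < 0"
    using Lk_negative by blast
  have "ereal (m0 - v * Lk \<kappa> m0) \<le> kappa_part \<kappa> v" for v
    using sup_affine_upper[of m0 "{..<kappa_crit \<kappa>}" "\<lambda>m. m" v "Lk \<kappa>"] m0(1) by simp
  then show ?thesis
    using m0(2) by (intro exI[of _ m0] exI[of _ "- Lk \<kappa> m0"]) (simp add: algebra_simps)
qed

text \<open>For nu > 0 the objective m - nu Lk(m) tends to -\<infinity> at both ends of its domain, so the
  supremum defining kappa_part nu is attained.\<close>

lemma objective_left_tail: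
  assumes v: "0 < v"
  shows "\<exists>L \<le> 0. \<forall>m < L. m - v * Lk \<kappa> m < y"
proof -
  define e where "e = min 1 (\<kappa> / (16 * v))"
  have e: "0 < e" "e \<le> 1"
    using v kappa_pos by (auto simp: e_def)
  have "e \<le> \<kappa> / (16 * v)"
    by (simp add: e_def)
  then have "e * (16 * v) \<le> \<kappa>"
    using v by (simp add: pos_le_divide_eq)
  then have half: "8 * e * v / \<kappa> \<le> 1/2"
    using kappa_pos by (simp add: field_simps)
  define Q where "Q = pi\<^sup>2 / (4*e) - ln (kappa_const \<kappa>) - e * (1 - 4 / \<kappa>)\<^sup>2"
  define L where "L = min 0 (2 * (y - v * Q))"
  have "m - v * Lk \<kappa> m < y" if "m < L" for m
  proof -
    have m: "m \<le> 0" "m < kappa_crit \<kappa>"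
      using that kappa_crit_pos by (auto simp: L_def)
    have "(1/2 - 8 * e * v / \<kappa>) * m \<le> 0"
      using half m by (intro mult_nonneg_nonpos) auto
    moreover have "(1 - 8 * e * v / \<kappa>) * m = m / 2 + (1/2 - 8 * e * v / \<kappa>) * m"
      by (simp add: algebra_simps)
    ultimately have "m - v * Lk \<kappa> m \<le> m / 2 + v * Q"
      using affine_majorant[OF less_imp_le[OF v] e m(2)] by (simp add: Q_def)
    then show ?thesis
      using that by (simp add: L_def)
  qed
  then show ?thesis
    by (intro exI[of _ L]) (auto simp: L_def)
qed

lemma objective_right_tail:
  assumes v: "0 < v"
  shows "\<exists>U < kappa_crit \<kappa>. \<forall>m. U \<le> m \<longrightarrow> m < kappa_crit \<kappa> \<longrightarrow> m - v * Lk \<kappa> m < y"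
proof -
  obtain U where U: "U < kappa_crit \<kappa>"
    "\<And>m. U \<le> m \<Longrightarrow> m < kappa_crit \<kappa> \<Longrightarrow> (kappa_crit \<kappa> - y) / v + 1 \<le> Lk \<kappa> m"
    using Lk_unbounded by blast
  have "m - v * Lk \<kappa> m < y" if "U \<le> m" "m < kappa_crit \<kappa>" for m
  proof -
    have "v * ((kappa_crit \<kappa> - y) / v + 1) \<le> v * Lk \<kappa> m"
      using U(2)[OF that] v by (intro mult_left_mono) auto
    moreover have "v * ((kappa_crit \<kappa> - y) / v + 1) = kappa_crit \<kappa> - y + v"
      using v by (simp add: field_simps)
    ultimately show ?thesis
      using that(2) v by simp
  qed
  then show ?thesis
    using U(1) by blast
qed

lemma kappa_part_attained:
  assumes v: "0 < v"
  shows "\<exists>m < kappa_crit \<kappa>. \<forall>m' < kappa_crit \<kappa>. m' - v * Lk \<kappa> m' \<le> m - v * Lk \<kappa> m"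
proof -
  define phi where "phi m = m - v * Lk \<kappa> m" for m
  obtain L where L: "L \<le> 0" "\<And>m. m < L \<Longrightarrow> phi m < phi 0"
    using objective_left_tail[OF v, of "phi 0"] unfolding phi_def by blast
  obtain U where U: "U < kappa_crit \<kappa>" "\<And>m. U \<le> m \<Longrightarrow> m < kappa_crit \<kappa> \<Longrightarrow> phi m < phi 0"
    using objective_right_tail[OF v, of "phi 0"] unfolding phi_def by blast
  define S where "S = {L .. max U 0}"
  have S_sub: "S \<subseteq> {..<kappa_crit \<kappa>}"
    using U(1) kappa_crit_pos by (auto simp: S_def)
  have "continuous_on S phi"
    unfolding phi_def by (intro continuous_intros continuous_on_subset[OF Lk_continuous S_sub])
  moreover have "0 \<in> S" "compact S"
    using L(1) by (simp_all add: S_def)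
  ultimately obtain ms where ms: "ms \<in> S" "\<And>m. m \<in> S \<Longrightarrow> phi m \<le> phi ms"
    using continuous_attains_sup[of S phi] by blast
  text \<open>Outside the compact interval S the objective stays below its value at 0.\<close>
  have "phi m' \<le> phi ms" if "m' < kappa_crit \<kappa>" for m'
  proof (cases "m' \<in> S")
    case False
    then have "m' < L \<or> U \<le> m'"
      by (auto simp: S_def)
    then show ?thesis
      using L(2) U(2) that ms(2)[OF \<open>0 \<in> S\<close>] by force
  qed (use ms in auto)
  then show ?thesis
    using ms(1) S_sub by (auto simp: phi_def)
qed

lemma maximizer_stationary:
  assumes m: "m < kappa_crit \<kappa>"
    and max: "\<And>m'. m' < kappa_crit \<kappa> \<Longrightarrow> m' - v * Lk \<kappa> m' \<le> m - v * Lk \<kappa> m"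
  shows "v * Lk_deriv \<kappa> m = 1"
proof -
  have "((\<lambda>m. m - v * Lk \<kappa> m) has_real_derivative 1 - v * Lk_deriv \<kappa> m) (at m)"
    by (intro DERIV_diff DERIV_ident DERIV_cmult Lk_has_derivative m)
  moreover have "\<forall>y. \<bar>m - y\<bar> < kappa_crit \<kappa> - m \<longrightarrow> y - v * Lk \<kappa> y \<le> m - v * Lk \<kappa> m"
    using max by (auto simp: abs_if split: if_splits)
  ultimately have "1 - v * Lk_deriv \<kappa> m = 0"
    using m by (intro DERIV_local_max) auto
  then show ?thesis by simp
qed

text \<open>Strict convexity of kappa_part on [0, \<infinity>). If equality held at the midpoint w3, the
  maximiser m3 for w3 would also maximise for w1; at w1 = 0 no maximiser exists, and for
  w1 > 0 the stationarity conditions w1 Lk'(m3) = 1 = w3 Lk'(m3) contradict w1 \<noteq> w3.\<close>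

lemma kappa_part_strictly_convex:
  assumes w: "0 \<le> w1" "w1 < w2"
  shows "kappa_part \<kappa> ((w1 + w2) / 2) < (kappa_part \<kappa> w1 + kappa_part \<kappa> w2) / 2"
proof -
  let ?K = "kappa_part \<kappa>"
  define w3 where "w3 = (w1 + w2) / 2"
  have w3: "0 < w3" "w1 < w3"
    using w by (auto simp: w3_def)
  obtain k1 k2 where k: "?K w1 = ereal k1" "?K w2 = ereal k2"
    using kappa_part_finite kappa_part_not_minf w by (metis ereal_cases less_imp_le order_trans)
  obtain m3 where m3: "m3 < kappa_crit \<kappa>"
    "\<And>m. m < kappa_crit \<kappa> \<Longrightarrow> m - w3 * Lk \<kappa> m \<le> m3 - w3 * Lk \<kappa> m3"
    using kappa_part_attained[OF w3(1)] by blast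
  define f where "f w = m3 - w * Lk \<kappa> m3" for w
  have K3: "?K w3 = ereal (f w3)"
    using m3 sup_affine_upper[of m3 "{..<kappa_crit \<kappa>}" "\<lambda>m. m" w3 "Lk \<kappa>"]
    by (intro antisym sup_affine_least) (auto simp: f_def)
  have f_le: "ereal (f w) \<le> ?K w" for w
    using m3(1) sup_affine_upper[of m3 "{..<kappa_crit \<kappa>}" "\<lambda>m. m" w "Lk \<kappa>"] by (simp add: f_def)
  have "f w3 < (k1 + k2) / 2"
  proof (rule ccontr)
    assume "\<not> f w3 < (k1 + k2) / 2"
    moreover have "f w3 = (f w1 + f w2) / 2"
      by (simp add: f_def w3_def field_simps)
    moreover have "f w1 \<le> k1" "f w2 \<le> k2"
      using f_le[of w1] f_le[of w2] k by auto
    ultimately have max1: "m - w1 * Lk \<kappa> m \<le> m3 - w1 * Lk \<kappa> m3" if "m < kappa_crit \<kappa>" for m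
      using sup_affine_upper[of m "{..<kappa_crit \<kappa>}" "\<lambda>m. m" w1 "Lk \<kappa>"] that k
      by (simp add: f_def)
    show False
    proof (cases "w1 = 0")
      case True
      then show False
        using max1[of "(m3 + kappa_crit \<kappa>) / 2"] m3(1) by simp
    next
      case False
      have "(w3 - w1) * Lk_deriv \<kappa> m3 = 0"
        using maximizer_stationary[OF m3(1) max1] maximizer_stationary[OF m3]
        by (simp add: left_diff_distrib)
      then show False
        using maximizer_stationary[OF m3] w3 by simp
    qed
  qed
  then show ?thesis
    using K3 k by (simp add: w3_def)
qed

text \<open>To the left of a threshold ms the objective is controlled by affine_majorant, to the right of
  it Lk is large.\<close>

lemma objective_left_of:
  assumes v: "0 \<le> v" "8 * v \<le> \<kappa>" and m: "m \<le> ms" "m < kappa_crit \<kappa>"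
  shows "m - v * Lk \<kappa> m
    \<le> ms + v * (pi\<^sup>2 / 4 - ln (kappa_const \<kappa>) - (1 - 4 / \<kappa>)\<^sup>2 - 8 * ms / \<kappa>)"
proof -
  define Q where "Q = pi\<^sup>2 / 4 - ln (kappa_const \<kappa>) - (1 - 4 / \<kappa>)\<^sup>2"
  have "0 \<le> 1 - 8 * v / \<kappa>"
    using v(2) kappa_pos by (simp add: field_simps)
  then have "(1 - 8 * v / \<kappa>) * m \<le> (1 - 8 * v / \<kappa>) * ms"
    using m(1) by (intro mult_left_mono) auto
  moreover have "m - v * Lk \<kappa> m \<le> (1 - 8 * v / \<kappa>) * m + v * Q"
    using affine_majorant[of v 1 m] v(1) m(2) by (simp add: Q_def)
  moreover have "(1 - 8 * v / \<kappa>) * ms + v * Q = ms + v * (Q - 8 * ms / \<kappa>)"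
    using kappa_pos by (simp add: field_simps)
  ultimately show ?thesis
    unfolding Q_def by linarith
qed

lemma kappa_part_steep_at_0:
  assumes v1: "0 < v1"
  shows "\<exists>v. 0 < v \<and> v \<le> v1 \<and> kappa_part \<kappa> v < ereal (kappa_crit \<kappa> - B * v)"
proof -
  obtain ms where ms: "ms < kappa_crit \<kappa>"
    "\<And>m. ms \<le> m \<Longrightarrow> m < kappa_crit \<kappa> \<Longrightarrow> \<bar>B\<bar> + 1 \<le> Lk \<kappa> m"
    using Lk_unbounded by blast
  define E where "E = pi\<^sup>2 / 4 - ln (kappa_const \<kappa>) - (1 - 4 / \<kappa>)\<^sup>2 - 8 * ms / \<kappa>"
  define D where "D = 2 * (\<bar>E\<bar> + \<bar>B\<bar> + 1)"
  define v where "v = min v1 (min (\<kappa> / 8) ((kappa_crit \<kappa> - ms) / D))"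
  have D: "0 < D" "E + B < D"
    by (auto simp: D_def)
  have v_le: "v \<le> v1" "v \<le> \<kappa> / 8" "v \<le> (kappa_crit \<kappa> - ms) / D"
    unfolding v_def by (meson min.cobounded1 min.cobounded2 order_trans)+
  have v: "0 < v" "8 * v \<le> \<kappa>" "v * D \<le> kappa_crit \<kappa> - ms"
    using v1 kappa_pos ms(1) D(1) v_le by (simp_all add: v_def pos_le_divide_eq)
  have bound: "m - v * Lk \<kappa> m \<le> max (kappa_crit \<kappa> - v * (\<bar>B\<bar> + 1)) (ms + v * E)"
    if m: "m < kappa_crit \<kappa>" for m
  proof (cases "ms \<le> m")
    case True
    then have "v * (\<bar>B\<bar> + 1) \<le> v * Lk \<kappa> m"
      using ms(2) m v(1) by (intro mult_left_mono) auto
    then show ?thesis using m by linarith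
  next
    case False
    then have "m - v * Lk \<kappa> m \<le> ms + v * E"
      using objective_left_of[of v m ms] v(1,2) m by (simp add: E_def)
    then show ?thesis by linarith
  qed
  have "B * v < v * (\<bar>B\<bar> + 1)"
    using v(1) mult_strict_left_mono[of B "\<bar>B\<bar> + 1" v] by (simp add: mult.commute)
  moreover have "v * (E + B) < kappa_crit \<kappa> - ms"
    using mult_strict_left_mono[OF D(2) v(1)] v(3) by linarith
  ultimately have "max (kappa_crit \<kappa> - v * (\<bar>B\<bar> + 1)) (ms + v * E) < kappa_crit \<kappa> - B * v"
    by (simp add: algebra_simps)
  moreover have "kappa_part \<kappa> v \<le> ereal (max (kappa_crit \<kappa> - v * (\<bar>B\<bar> + 1)) (ms + v * E))"
    by (rule sup_affine_least) (simp only: ereal_less_eq(3) lessThan_iff bound)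
  ultimately have "kappa_part \<kappa> v < ereal (kappa_crit \<kappa> - B * v)"
    by (metis le_less_trans less_ereal.simps(1))
  then show ?thesis
    using v(1) v_le(1) by blast
qed

lemma crit_interval_nonempty: "{..<kappa_crit \<kappa>} \<noteq> {}"
  by (auto intro!: exI[of _ "kappa_crit \<kappa> - 1"])

lemma sum_attains_min:
  assumes nonneg: "\<And>v. 0 \<le> sup_affine D a b v"
    and fin: "0 \<le> vs" "sup_affine D a b vs + kappa_part \<kappa> vs \<noteq> \<infinity>"
  shows "\<exists>v0\<ge>0. \<forall>v\<ge>0. sup_affine D a b v0 + kappa_part \<kappa> v0 \<le> sup_affine D a b v + kappa_part \<kappa> v"
proof -
  have "D \<noteq> {}"
    using nonneg[of 0] by (auto simp: sup_affine_def bot_ereal_def)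
  note sum_eq = sup_affine_add[OF this crit_interval_nonempty, of a b _ "\<lambda>m. m" "Lk \<kappa>"]
  obtain c d where cd: "0 < d" "\<And>v. ereal (c + d * v) \<le> kappa_part \<kappa> v"
    using kappa_part_grows by blast
  have "ereal (c + d * v) \<le> sup_affine D a b v + kappa_part \<kappa> v" for v
    using add_mono[OF nonneg cd(2)] by simp
  then show ?thesis
    unfolding sum_eq using cd(1) fin unfolding sum_eq by (intro sup_affine_attains_min) auto
qed

lemma sum_strictly_convex:
  assumes D: "D \<noteq> {}" and w: "0 \<le> w1" "w1 < w2"
    and fin: "sup_affine D a b w1 \<noteq> \<infinity>" "sup_affine D a b w2 \<noteq> \<infinity>"
  shows "2 * (sup_affine D a b ((w1 + w2) / 2) + kappa_part \<kappa> ((w1 + w2) / 2))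
    < (sup_affine D a b w1 + kappa_part \<kappa> w1) + (sup_affine D a b w2 + kappa_part \<kappa> w2)"
proof -
  let ?A = "sup_affine D a b" and ?K = "kappa_part \<kappa>"
  define w3 where "w3 = (w1 + w2) / 2"
  have K_real: "\<exists>r. ?K v = ereal r" if "0 \<le> v" for v
    using kappa_part_finite[OF that] kappa_part_not_minf[of v] by (cases "?K v") auto
  obtain a1 a2 k1 k2 where ak: "?A w1 = ereal a1" "?A w2 = ereal a2" "?K w1 = ereal k1" "?K w2 = ereal k2"
    using fin sup_affine_not_minf[OF D] K_real[of w1] K_real[of w2] w by (metis ereal_cases less_imp_le order_trans)
  have "?A w3 \<le> ereal (1 - 1/2) * ?A w1 + ereal (1/2) * ?A w2"
    unfolding w3_def by (rule order_trans[OF _ sup_affine_convex]) (simp_all add: field_simps)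
  then have A3: "?A w3 \<le> ereal ((a1 + a2) / 2)"
    by (simp add: ak field_simps)
  have K3: "?K w3 < ereal ((k1 + k2) / 2)"
    using kappa_part_strictly_convex[OF w] ak by (simp add: w3_def)
  obtain a3 k3 where "?A w3 = ereal a3" "?K w3 = ereal k3"
    using A3 K3 sup_affine_not_minf[OF D, of a b w3] kappa_part_not_minf[of w3]
    by (cases "?A w3"; cases "?K w3") auto
  then show ?thesis
    using A3 K3 ak by (simp add: w3_def)
qed

lemma sum_min_unique:
  assumes D: "D \<noteq> {}"
    and min1: "0 \<le> v1" "\<forall>v\<ge>0. sup_affine D a b v1 + kappa_part \<kappa> v1 \<le> sup_affine D a b v + kappa_part \<kappa> v"
    and min2: "0 \<le> v2" "\<forall>v\<ge>0. sup_affine D a b v2 + kappa_part \<kappa> v2 \<le> sup_affine D a b v + kappa_part \<kappa> v"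
    and fin: "sup_affine D a b v1 + kappa_part \<kappa> v1 \<noteq> \<infinity>"
  shows "v1 = v2"
proof -
  let ?H = "\<lambda>v. sup_affine D a b v + kappa_part \<kappa> v"
  have eq: "?H v1 = ?H v2"
    using min1 min2 by (meson antisym)
  have finA: "sup_affine D a b v \<noteq> \<infinity>" if "?H v \<noteq> \<infinity>" for v
    using that by auto
  text \<open>Two distinct minimizers would make the midpoint strictly better than both.\<close>
  have no_two: False if w: "0 \<le> w1" "w1 < w2" "?H w1 = ?H w2" "?H w1 \<noteq> \<infinity>"
    and min: "\<forall>v\<ge>0. ?H w1 \<le> ?H v" for w1 w2
  proof -
    obtain r where r: "?H w1 = ereal r"
      using w(4) kappa_part_not_minf[of w1] sup_affine_not_minf[OF D, of a b w1] by (cases "?H w1") auto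
    have "2 * ?H ((w1 + w2) / 2) < ereal r + ereal r"
      using sum_strictly_convex[OF D w(1,2) finA finA] w(3,4) r by simp
    moreover have "ereal r \<le> ?H ((w1 + w2) / 2)"
      using min w(1,2) r by simp
    ultimately show False
      by (cases "?H ((w1 + w2) / 2)") auto
  qed
  show ?thesis
  proof (rule linorder_cases[of v1 v2])
    assume "v1 < v2"
    then show ?thesis using no_two[of v1 v2] min1 eq fin by simp
  next
    assume "v2 < v1"
    then show ?thesis using no_two[of v2 v1] min2 eq fin by simp
  qed
qed

lemma sum_min_not_at_0:
  assumes D: "D \<noteq> {}" and v1: "0 < v1" "sup_affine D a b v1 \<noteq> \<infinity>"
  shows "\<exists>v>0. sup_affine D a b v + kappa_part \<kappa> v < sup_affine D a b 0 + kappa_part \<kappa> 0"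
proof (cases "sup_affine D a b 0 = \<infinity>")
  case True
  have "sup_affine D a b v1 + kappa_part \<kappa> v1 \<noteq> \<infinity>"
    using v1 kappa_part_finite[of v1] sup_affine_not_minf[OF D, of a b v1] kappa_part_not_minf[of v1]
    by auto
  then show ?thesis
    using True v1(1) kappa_part_not_minf[of 0] by (auto simp: top.not_eq_extremum)
next
  case False
  obtain A0 A1 where A: "sup_affine D a b 0 = ereal A0" "sup_affine D a b v1 = ereal A1"
    using False v1(2) sup_affine_not_minf[OF D] by (metis ereal_cases)
  obtain v where v: "0 < v" "v \<le> v1" "kappa_part \<kappa> v < ereal (kappa_crit \<kappa> - (A1 - A0) / v1 * v)"
    using kappa_part_steep_at_0[OF v1(1)] by blast
  have "sup_affine D a b v = sup_affine D a b ((1 - v/v1) * 0 + (v/v1) * v1)"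
    using v1 by simp
  also have "\<dots> \<le> ereal (1 - v/v1) * sup_affine D a b 0 + ereal (v/v1) * sup_affine D a b v1"
    using v v1 by (intro sup_affine_convex) auto
  also have "\<dots> = ereal (A0 + (A1 - A0) / v1 * v)"
    using v1(1) by (simp add: A field_simps)
  finally have "sup_affine D a b v \<le> ereal (A0 + (A1 - A0) / v1 * v)" .
  then have "sup_affine D a b v + kappa_part \<kappa> v < ereal A0 + ereal (kappa_crit \<kappa>)"
    using v(3) sup_affine_not_minf[OF D, of a b v] kappa_part_not_minf[of v]
    by (cases "sup_affine D a b v"; cases "kappa_part \<kappa> v") auto
  then show ?thesis
    using v(1) A kappa_part_zero by auto
qed

end

section \<open>The measure part Lambda_mu\<close>

text \<open>The barycenter of a piece B of positive mass, and the first summand of gamma_kappa as a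
  function of nu (by scaled_legendre).\<close>

definition barycenter :: "real measure \<Rightarrow> real set \<Rightarrow> real" where
  "barycenter \<mu> B = (\<integral>y. indicator B y * y \<partial>\<mu>) / measure \<mu> B"

abbreviation mu_part :: "real measure \<Rightarrow> real \<Rightarrow> real \<Rightarrow> ereal" where
  "mu_part \<mu> \<alpha> \<equiv> sup_affine {l. Lambda_mu \<mu> l \<noteq> \<infinity>} (\<lambda>l. l * \<alpha>) (\<lambda>l. real_of_ereal (Lambda_mu \<mu> l))"

lemma Lambda_mu_not_minf: "Lambda_mu \<mu> l \<noteq> -\<infinity>"
  by (simp add: Lambda_mu_def Let_def)

context
  fixes \<mu> :: "real measure"
  assumes prob: "prob_space \<mu>" and borel: "sets \<mu> = sets borel"
begin

interpretation prob_space \<mu> by (fact prob)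

lemma Lambda_mu_zero: "Lambda_mu \<mu> 0 = 0"
  by (simp add: Lambda_mu_def Let_def emeasure_space_1 zero_ereal_def)

lemma Lambda_mu_nonpos:
  assumes "AE x in \<mu>. l * x \<le> 0"
  shows "Lambda_mu \<mu> l \<le> 0"
proof -
  let ?I = "\<integral>\<^sup>+ x. ennreal (exp (l * x)) \<partial>\<mu>"
  have "?I \<le> (\<integral>\<^sup>+ x. 1 \<partial>\<mu>)"
    using assms by (intro nn_integral_mono_AE) (auto elim!: eventually_mono)
  then have le1: "?I \<le> 1"
    by (simp add: emeasure_space_1)
  then have "enn2real ?I \<le> 1"
    using enn2real_mono[of ?I 1] by simp
  moreover have "enn2real ?I = 0 \<or> 0 < enn2real ?I"
    using enn2real_nonneg[of ?I] by linarith
  ultimately have "ln (enn2real ?I) \<le> 0"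
    using ln_le_zero_iff[of "enn2real ?I"] by auto
  moreover have "?I \<noteq> \<infinity>"
    using le1 by (auto simp: top_unique)
  ultimately show ?thesis
    by (simp add: Lambda_mu_def Let_def zero_ereal_def)
qed

text \<open>The affine function with index 0 vanishes, so mu_part is nonnegative.\<close>

lemma mu_part_nonneg: "0 \<le> mu_part \<mu> \<alpha> v"
  using sup_affine_upper[of 0 "{l. Lambda_mu \<mu> l \<noteq> \<infinity>}" "\<lambda>l. l * \<alpha>" v "\<lambda>l. real_of_ereal (Lambda_mu \<mu> l)"]
  by (simp add: Lambda_mu_zero zero_ereal_def)

lemma mu_part_alpha0_at_0: "mu_part \<mu> 0 0 = 0"
  using mu_part_nonneg[of 0 0] by (intro antisym sup_affine_least) (auto simp: zero_ereal_def)

lemma mu_domain_nonempty: "{l. Lambda_mu \<mu> l \<noteq> \<infinity>} \<noteq> {}"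
  using Lambda_mu_zero by (auto intro!: exI[of _ 0])

lemma integrable_on_bounded:
  fixes f :: "real \<Rightarrow> real"
  assumes B: "B \<in> sets borel" and bnd: "\<And>y. y \<in> B \<Longrightarrow> \<bar>f y\<bar> \<le> R"
    and f: "f \<in> borel_measurable borel"
  shows "integrable \<mu> (\<lambda>y. indicator B y * f y)"
proof (rule integrable_const_bound[where B = "\<bar>R\<bar>"])
  show "AE y in \<mu>. norm (indicator B y * f y) \<le> \<bar>R\<bar>"
    using bnd by (intro AE_I2) (auto simp: indicator_def intro: order_trans[OF _ abs_ge_self])
  show "(\<lambda>y. indicator B y * f y) \<in> borel_measurable \<mu>"
    using B f by (simp add: measurable_cong_sets[OF borel refl])
qed

context
  fixes B :: "real set" and R :: real
  assumes B: "B \<in> sets borel" "\<And>y. y \<in> B \<Longrightarrow> \<bar>y\<bar> \<le> R" and pos: "0 < measure \<mu> B"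
begin

lemma integral_indicator_times_id: "(\<integral>y. indicator B y * y \<partial>\<mu>) = barycenter \<mu> B * measure \<mu> B"
  using pos by (simp add: barycenter_def)

lemma barycenter_bound:
  assumes "\<And>y. y \<in> B \<Longrightarrow> c \<le> \<alpha> * y"
  shows "c \<le> \<alpha> * barycenter \<mu> B"
proof -
  have "c * measure \<mu> B = (\<integral>y. indicator B y * c \<partial>\<mu>)"
    using B(1) by (simp add: borel)
  also have "\<dots> \<le> (\<integral>y. indicator B y * (\<alpha> * y) \<partial>\<mu>)"
    using assms B by (intro integral_mono integrable_on_bounded[where R = "\<bar>c\<bar>"]
        integrable_on_bounded[where R = "\<bar>\<alpha>\<bar> * R"]) (auto simp: indicator_def abs_mult mult_left_mono)
  also have "\<dots> = \<alpha> * barycenter \<mu> B * measure \<mu> B"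
    by (simp add: integral_indicator_times_id[symmetric] mult.left_commute)
  finally show ?thesis
    using pos by simp
qed

lemma integrable_exp_on_piece: "integrable \<mu> (\<lambda>y. indicator B y * exp (l * y))"
proof -
  have "\<bar>exp (l * y)\<bar> \<le> exp (\<bar>l\<bar> * R)" if "y \<in> B" for y
    using B(2)[OF that] abs_ge_self[of "l * y"] mult_left_mono[of "\<bar>y\<bar>" R "\<bar>l\<bar>"]
    by (simp add: abs_mult)
  then show ?thesis
    using B(1) by (intro integrable_on_bounded) auto
qed

text \<open>Jensen's inequality for the exponential on the piece B, obtained by integrating the
  tangent line of the exponential at the barycenter.\<close>

lemma exp_barycenter_le: "exp (l * barycenter \<mu> B) * measure \<mu> B \<le> (\<integral>y. indicator B y * exp (l * y) \<partial>\<mu>)"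
proof -
  define x where "x = barycenter \<mu> B"
  define tangent where "tangent y = exp (l * x) * (1 - l * x) * (indicator B y * 1) + exp (l * x) * l * (indicator B y * y)" for y
  have int_one: "integrable \<mu> (\<lambda>y. indicator B y * (1::real))"
    using B(1) by (rule integrable_on_bounded[where f = "\<lambda>_. 1" and R = 1]) auto
  have int_id: "integrable \<mu> (\<lambda>y. indicator B y * y)"
    using B by (intro integrable_on_bounded[where R = R]) auto
  have "(\<integral>y. tangent y \<partial>\<mu>) = exp (l * x) * (1 - l * x) * (\<integral>y. indicator B y * 1 \<partial>\<mu>)
      + exp (l * x) * l * (\<integral>y. indicator B y * y \<partial>\<mu>)"
    using int_one int_id by (simp add: tangent_def Bochner_Integration.integral_add)
  also have "\<dots> = exp (l * x) * measure \<mu> B"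
    using B(1) integral_indicator_times_id by (simp add: x_def borel algebra_simps)
  finally have "exp (l * x) * measure \<mu> B = (\<integral>y. tangent y \<partial>\<mu>)"
    by simp
  also have "\<dots> \<le> (\<integral>y. indicator B y * exp (l * y) \<partial>\<mu>)"
  proof (rule integral_mono[OF _ integrable_exp_on_piece])
    show "integrable \<mu> tangent"
      unfolding tangent_def[abs_def] using int_one int_id by auto
    fix y
    have "exp (l * x) * (1 + l * (y - x)) \<le> exp (l * x) * exp (l * (y - x))"
      by (intro mult_left_mono exp_ge_add_one_self) simp
    also have "\<dots> = exp (l * y)"
      by (simp add: mult_exp_exp algebra_simps)
    finally show "tangent y \<le> indicator B y * exp (l * y)"
      by (simp add: tangent_def indicator_def algebra_simps)
  qed
  finally show ?thesis
    by (simp add: x_def)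
qed

lemma Lambda_mu_ge_barycenter:
  assumes fin: "Lambda_mu \<mu> l \<noteq> \<infinity>"
  shows "l * barycenter \<mu> B + ln (measure \<mu> B) \<le> real_of_ereal (Lambda_mu \<mu> l)"
proof -
  let ?I = "\<integral>\<^sup>+ y. ennreal (exp (l * y)) \<partial>\<mu>"
  let ?J = "\<integral>y. indicator B y * exp (l * y) \<partial>\<mu>"
  have Ifin: "?I \<noteq> \<infinity>"
    using fin by (cases "?I = \<infinity>") (simp_all add: Lambda_mu_def Let_def)
  have "ennreal ?J = (\<integral>\<^sup>+ y. indicator B y * exp (l * y) \<partial>\<mu>)"
    using integrable_exp_on_piece by (intro nn_integral_eq_integral[symmetric]) auto
  also have "\<dots> \<le> ?I"
    by (intro nn_integral_mono) (auto simp: indicator_def)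
  finally have "enn2real (ennreal ?J) \<le> enn2real ?I"
    using Ifin by (intro enn2real_mono) (simp_all add: top.not_eq_extremum)
  then have "?J \<le> enn2real ?I"
    by simp
  then have "exp (l * barycenter \<mu> B) * measure \<mu> B \<le> enn2real ?I"
    using exp_barycenter_le[of l] by linarith
  then have "ln (exp (l * barycenter \<mu> B) * measure \<mu> B) \<le> ln (enn2real ?I)"
    using pos by (intro ln_mono) simp_all
  then show ?thesis
    using Ifin pos by (simp add: Lambda_mu_def Let_def ln_mult)
qed

end

lemma bounded_piece_of_positive_mass:
  assumes pos: "0 < measure \<mu> {x. 0 < \<alpha> * x}"
  shows "\<exists>n::nat. 0 < measure \<mu> {x. 1 / Suc n \<le> \<alpha> * x \<and> \<alpha> * x \<le> Suc n}"
proof (rule ccontr)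
  define C where "C n = {x. 1 / Suc n \<le> \<alpha> * x \<and> \<alpha> * x \<le> Suc n}" for n :: nat
  have C_sets: "C n \<in> sets \<mu>" for n
    unfolding C_def borel by measurable
  assume "\<not> ?thesis"
  then have "measure \<mu> (C n) = 0" for n
    using measure_nonneg[of \<mu> "C n"] by (auto simp: C_def not_less intro: antisym)
  then have "emeasure \<mu> (C n) = 0" for n
    by (simp add: emeasure_eq_measure)
  then have "emeasure \<mu> (\<Union>n. C n) = 0"
    using C_sets by (intro emeasure_UN_eq_0) auto
  moreover have "{x. 0 < \<alpha> * x} \<subseteq> (\<Union>n. C n)"
  proof
    fix x assume "x \<in> {x. 0 < \<alpha> * x}"
    then have ax: "0 < \<alpha> * x" by simp
    obtain n :: nat where n: "max (\<alpha> * x) (1 / (\<alpha> * x)) < n"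
      using reals_Archimedean2 by blast
    then have "1 / Suc n \<le> \<alpha> * x"
      using ax by (simp add: field_simps)
    moreover have "\<alpha> * x \<le> Suc n"
      using n by simp
    ultimately show "x \<in> (\<Union>n. C n)"
      by (auto simp: C_def)
  qed
  moreover have "(\<Union>n. C n) \<in> sets \<mu>"
    using C_sets by auto
  ultimately have "emeasure \<mu> {x. 0 < \<alpha> * x} = 0"
    using emeasure_mono[of "{x. 0 < \<alpha> * x}" "\<Union>n. C n" \<mu>] by simp
  then show False
    using pos by (simp add: emeasure_eq_measure)
qed

lemma piece_with_positive_barycenter:
  assumes pos: "0 < measure \<mu> {x. 0 < \<alpha> * x}"
  shows "\<exists>B R. B \<in> sets borel \<and> (\<forall>y\<in>B. \<bar>y\<bar> \<le> R) \<and> 0 < measure \<mu> B \<and> 0 < \<alpha> * barycenter \<mu> B"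
proof -
  obtain n :: nat where n: "0 < measure \<mu> {x. 1 / Suc n \<le> \<alpha> * x \<and> \<alpha> * x \<le> Suc n}"
    using bounded_piece_of_positive_mass[OF pos] by blast
  define B where "B = {x. 1 / Suc n \<le> \<alpha> * x \<and> \<alpha> * x \<le> Suc n}"
  have "\<alpha> \<noteq> 0"
    using n by (auto simp: B_def)
  have B_sets: "B \<in> sets borel"
    unfolding B_def by measurable
  have B_pos: "1 / Suc n \<le> \<alpha> * y" "0 < \<alpha> * y" "\<alpha> * y \<le> Suc n" if "y \<in> B" for y
  proof -
    show y: "1 / real (Suc n) \<le> \<alpha> * y" "\<alpha> * y \<le> Suc n"
      using that unfolding B_def by blast+
    have "0 < 1 / real (Suc n)"
      by simp
    then show "0 < \<alpha> * y"
      using y by linarith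
  qed
  have B_bounded: "\<bar>y\<bar> \<le> Suc n / \<bar>\<alpha>\<bar>" if "y \<in> B" for y
  proof -
    have "\<bar>\<alpha>\<bar> * \<bar>y\<bar> \<le> Suc n"
      using B_pos[OF that] by (simp add: abs_mult[symmetric])
    then show ?thesis
      using \<open>\<alpha> \<noteq> 0\<close> by (simp add: field_simps)
  qed
  have "1 / Suc n \<le> \<alpha> * barycenter \<mu> B"
    using B_sets B_bounded n B_pos(1) by (intro barycenter_bound) (auto simp: B_def)
  moreover have "0 < 1 / real (Suc n)"
    by simp
  ultimately have "0 < \<alpha> * barycenter \<mu> B"
    by linarith
  then show ?thesis
    using B_sets B_bounded n by (intro exI[of _ B] exI[of _ "Suc n / \<bar>\<alpha>\<bar>"]) (auto simp: B_def)
qed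

text \<open>Under positive mass on the alpha-side, mu_part is finite at nu = alpha / x for the barycenter
  x of such a piece.\<close>

lemma mu_part_finite:
  assumes pos: "0 < measure \<mu> {x. 0 < \<alpha> * x}"
  shows "\<exists>v1>0. mu_part \<mu> \<alpha> v1 \<noteq> \<infinity>"
proof -
  obtain B R where B: "B \<in> sets borel" "\<And>y. y \<in> B \<Longrightarrow> \<bar>y\<bar> \<le> R" "0 < measure \<mu> B"
    and ax: "0 < \<alpha> * barycenter \<mu> B"
    using piece_with_positive_barycenter[OF pos] by blast
  define x where "x = barycenter \<mu> B"
  define v1 where "v1 = \<alpha> / x"
  have v1: "0 < v1" "v1 * x = \<alpha>"
    using ax by (auto simp: x_def v1_def zero_less_divide_iff zero_less_mult_iff)
  text \<open>At the slope v1 the linear lower bound of Lambda_mu at the barycenter cancels the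
    linear term of the affine functions.\<close>
  have "mu_part \<mu> \<alpha> v1 \<le> ereal (- v1 * ln (measure \<mu> B))"
  proof (rule sup_affine_least)
    fix l assume "l \<in> {l. Lambda_mu \<mu> l \<noteq> \<infinity>}"
    then have "l * x + ln (measure \<mu> B) \<le> real_of_ereal (Lambda_mu \<mu> l)"
      unfolding x_def using B by (intro Lambda_mu_ge_barycenter) auto
    then have "v1 * (l * x + ln (measure \<mu> B)) \<le> v1 * real_of_ereal (Lambda_mu \<mu> l)"
      using v1(1) by (intro mult_left_mono) auto
    then show "ereal (l * \<alpha> - v1 * real_of_ereal (Lambda_mu \<mu> l)) \<le> ereal (- v1 * ln (measure \<mu> B))"
      using v1(2) by (simp add: algebra_simps)
  qed
  then show ?thesis
    using v1(1) by (metis ereal_infty_less_eq(1) PInfty_neq_ereal(1))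
qed

text \<open>Without mass on the alpha-side, Lambda_mu \<le> 0 along the ray of l with l alpha \<ge> 0,
  so the Legendre transform of Lambda_mu is infinite at every point alpha / nu.\<close>

lemma AE_of_null_mass:
  assumes "measure \<mu> {x. 0 < \<alpha> * x} = 0"
  shows "AE x in \<mu>. \<alpha> * x \<le> 0"
proof -
  have "{x. 0 < \<alpha> * x} \<in> null_sets \<mu>"
    using assms by (simp add: null_sets_def borel emeasure_eq_measure)
  from AE_not_in[OF this] show ?thesis
    by (simp add: not_less)
qed

lemma legendre_mu_infinite:
  assumes "\<alpha> \<noteq> 0" "AE x in \<mu>. \<alpha> * x \<le> 0" "0 < v"
  shows "legendre (Lambda_mu \<mu>) (\<alpha> / v) = \<infinity>"
  unfolding legendre_def
proof (rule SUP_PInfty)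
  fix n :: nat
  define l where "l = real n * v / \<alpha>"
  have "AE x in \<mu>. l * x \<le> 0"
    using assms(2)
  proof eventually_elim
    case (elim x)
    have "l * x = (real n * v / \<alpha>\<^sup>2) * (\<alpha> * x)"
      using assms(1) by (simp add: l_def power2_eq_square field_simps)
    also have "\<dots> \<le> 0"
      by (rule mult_nonneg_nonpos) (use elim assms(3) in simp_all)
    finally show ?case .
  qed
  then have "Lambda_mu \<mu> l \<le> 0"
    by (rule Lambda_mu_nonpos)
  moreover have "l * (\<alpha> / v) = real n"
    using assms by (simp add: l_def)
  ultimately have "ereal (real n) \<le> ereal (l * (\<alpha> / v)) - Lambda_mu \<mu> l"
    using Lambda_mu_not_minf[of \<mu> l] by (cases "Lambda_mu \<mu> l") auto
  then show "\<exists>l\<in>UNIV. ereal (real n) \<le> ereal (l * (\<alpha> / v)) - Lambda_mu \<mu> l"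
    by blast
qed

end

section \<open>Minimisation of gamma_kappa\<close>

text \<open>The two sign cases of the theorem are one statement about the set {x. 0 < alpha x}.\<close>

lemma positive_side:
  "(0 < \<alpha> \<and> P {0<..}) \<or> (\<alpha> < 0 \<and> P {..<0}) \<Longrightarrow> \<alpha> \<noteq> 0 \<and> P {x::real. 0 < \<alpha> * x}"
proof (elim disjE conjE)
  assume "0 < \<alpha>" "P {0<..}"
  moreover have "{x. 0 < \<alpha> * x} = {0<..}"
    using \<open>0 < \<alpha>\<close> by (auto simp: zero_less_mult_iff)
  ultimately show ?thesis by simp
next
  assume "\<alpha> < 0" "P {..<0}"
  moreover have "{x. 0 < \<alpha> * x} = {..<0}"
    using \<open>\<alpha> < 0\<close> by (auto simp: zero_less_mult_iff)
  ultimately show ?thesis by simp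
qed

lemma gamma_pos_eq:
  assumes \<kappa>: "8/3 < \<kappa>" "\<kappa> < 8" and v: "0 < v"
  shows "gamma_pos \<kappa> \<mu> \<alpha> v = mu_part \<mu> \<alpha> v + kappa_part \<kappa> v"
proof -
  have dom: "Lambda_kappa \<kappa> l \<noteq> \<infinity> \<longleftrightarrow> l < kappa_crit \<kappa>" for l
    using Lambda_kappa_eq[OF \<kappa>, of l] Lambda_kappa_infinite[OF \<kappa>, of l] by (cases "l < kappa_crit \<kappa>") auto
  have nm: "Lambda_kappa \<kappa> l \<noteq> -\<infinity>" for l
    using Lambda_kappa_eq[OF \<kappa>, of l] Lambda_kappa_infinite[OF \<kappa>, of l] by (cases "l < kappa_crit \<kappa>") auto
  have "ereal v * legendre (Lambda_kappa \<kappa>) (1 / v)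
      = sup_affine {l. Lambda_kappa \<kappa> l \<noteq> \<infinity>} (\<lambda>l. l * 1) (\<lambda>l. real_of_ereal (Lambda_kappa \<kappa> l)) v"
    by (rule scaled_legendre[OF nm v])
  also have "\<dots> = kappa_part \<kappa> v"
    using dom Lambda_kappa_eq[OF \<kappa>] by (intro sup_affine_cong) auto
  finally show ?thesis
    using scaled_legendre[where \<Lambda> = "Lambda_mu \<mu>" and y = \<alpha>, OF Lambda_mu_not_minf v]
    by (simp add: gamma_pos_def)
qed

text \<open>The identification extends to nu = 0 when alpha = 0 (by definition) or when mu_part is
  finite somewhere (by right-continuity of the sum at 0).\<close>

lemma gamma_kappa_eq:
  assumes \<kappa>: "8/3 < \<kappa>" "\<kappa> < 8" and \<mu>: "prob_space \<mu>" "sets \<mu> = sets borel"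
    and fin: "\<alpha> = 0 \<or> (\<exists>v1>0. mu_part \<mu> \<alpha> v1 \<noteq> \<infinity>)" and v: "0 \<le> v"
  shows "gamma_kappa \<kappa> \<mu> \<alpha> v = mu_part \<mu> \<alpha> v + kappa_part \<kappa> v"
proof -
  let ?H = "\<lambda>v. mu_part \<mu> \<alpha> v + kappa_part \<kappa> v"
  have "gamma_kappa \<kappa> \<mu> \<alpha> 0 = ?H 0" if \<alpha>: "\<alpha> \<noteq> 0"
  proof -
    obtain v1 where v1: "0 < v1" "mu_part \<mu> \<alpha> v1 \<noteq> \<infinity>"
      using fin \<alpha> by blast
    note sum_eq = sup_affine_add[OF mu_domain_nonempty[OF \<mu>] crit_interval_nonempty[OF \<kappa>],
        of "\<lambda>l. l * \<alpha>" "\<lambda>l. real_of_ereal (Lambda_mu \<mu> l)" _ "\<lambda>m. m" "Lk \<kappa>"]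
    have "?H v1 \<noteq> \<infinity>"
      using v1 kappa_part_finite[OF \<kappa>, of v1] kappa_part_not_minf[OF \<kappa>, of v1]
        mu_part_nonneg[OF \<mu>, of \<alpha> v1] by auto
    then have "(?H \<longlongrightarrow> ?H 0) (at_right 0)"
      unfolding sum_eq using mu_domain_nonempty[OF \<mu>] v1(1) by (intro sup_affine_tendsto_at_0) auto
    moreover have "eventually (\<lambda>v. ?H v = gamma_pos \<kappa> \<mu> \<alpha> v) (at_right 0)"
      using gamma_pos_eq[OF \<kappa>] by (auto simp: eventually_at_right_field intro!: exI[of _ 1])
    ultimately have "(gamma_pos \<kappa> \<mu> \<alpha> \<longlongrightarrow> ?H 0) (at_right 0)"
      by (rule Lim_transform_eventually)
    then show ?thesis
      using \<alpha> by (simp add: gamma_kappa_def tendsto_Lim)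
  qed
  moreover have "gamma_kappa \<kappa> \<mu> 0 0 = ?H 0" if "\<alpha> = 0"
    using that mu_part_alpha0_at_0[OF \<mu>] kappa_part_zero[OF \<kappa>]
    by (simp add: gamma_kappa_def kappa_crit_def)
  ultimately show ?thesis
  proof (cases "v = 0")
    case False
    then show ?thesis
      using v gamma_pos_eq[OF \<kappa>] by (simp add: gamma_kappa_def)
  qed (cases "\<alpha> = 0"; simp)
qed

lemma gamma_kappa_infinite:
  assumes \<kappa>: "8/3 < \<kappa>" "\<kappa> < 8" and \<mu>: "prob_space \<mu>" "sets \<mu> = sets borel"
    and \<alpha>: "\<alpha> \<noteq> 0" "AE x in \<mu>. \<alpha> * x \<le> 0" and v: "0 \<le> v"
  shows "gamma_kappa \<kappa> \<mu> \<alpha> v = \<infinity>"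
proof -
  have pos: "gamma_pos \<kappa> \<mu> \<alpha> w = \<infinity>" if "0 < w" for w
  proof -
    have "ereal (0 * (1 / w)) - Lambda_kappa \<kappa> 0 \<le> legendre (Lambda_kappa \<kappa>) (1 / w)"
      unfolding legendre_def by (rule SUP_upper) simp
    then have "legendre (Lambda_kappa \<kappa>) (1 / w) \<noteq> -\<infinity>"
      using Lambda_kappa_eq[OF \<kappa> kappa_crit_pos[OF \<kappa>]] by auto
    then have "ereal w * legendre (Lambda_kappa \<kappa>) (1 / w) \<noteq> -\<infinity>"
      using that by (cases "legendre (Lambda_kappa \<kappa>) (1 / w)") auto
    then show ?thesis
      using legendre_mu_infinite[OF \<mu> \<alpha> that] that by (simp add: gamma_pos_def)
  qed
  then have "(gamma_pos \<kappa> \<mu> \<alpha> \<longlongrightarrow> \<infinity>) (at_right 0)"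
    by (intro tendsto_eventually) (auto simp: eventually_at_right_field intro!: exI[of _ 1])
  then show ?thesis
  proof (cases "v = 0")
    case False
    then show ?thesis
      using v pos by (simp add: gamma_kappa_def)
  qed (use \<alpha>(1) in \<open>simp add: gamma_kappa_def tendsto_Lim\<close>)
qed

lemma gamma_kappa_unique_minimizer:
  assumes \<kappa>: "8/3 < \<kappa>" "\<kappa> < 8" and \<mu>: "prob_space \<mu>" "sets \<mu> = sets borel"
    and fin: "\<alpha> = 0 \<or> (\<exists>v1>0. mu_part \<mu> \<alpha> v1 \<noteq> \<infinity>)"
    and vs: "0 \<le> vs" "mu_part \<mu> \<alpha> vs + kappa_part \<kappa> vs \<noteq> \<infinity>"
  shows "\<exists>!\<nu>0. \<nu>0 \<ge> 0 \<and> (\<forall>\<nu>\<ge>0. gamma_kappa \<kappa> \<mu> \<alpha> \<nu>0 \<le> gamma_kappa \<kappa> \<mu> \<alpha> \<nu>)"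
proof -
  let ?H = "\<lambda>v. mu_part \<mu> \<alpha> v + kappa_part \<kappa> v"
  have gamma: "gamma_kappa \<kappa> \<mu> \<alpha> v = ?H v" if "0 \<le> v" for v
    using gamma_kappa_eq[OF \<kappa> \<mu> fin that] .
  obtain v0 where v0: "0 \<le> v0" "\<forall>v\<ge>0. ?H v0 \<le> ?H v"
    using sum_attains_min[OF \<kappa> mu_part_nonneg[OF \<mu>] vs] by blast
  have "?H v0 \<le> ?H vs"
    using v0(2) vs(1) by blast
  then have v0_fin: "?H v0 \<noteq> \<infinity>"
    using vs(2) by auto
  show ?thesis
  proof (rule ex1I[of _ v0])
    show "0 \<le> v0 \<and> (\<forall>\<nu>\<ge>0. gamma_kappa \<kappa> \<mu> \<alpha> v0 \<le> gamma_kappa \<kappa> \<mu> \<alpha> \<nu>)"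
      using v0 gamma by simp
  next
    fix w assume w: "0 \<le> w \<and> (\<forall>\<nu>\<ge>0. gamma_kappa \<kappa> \<mu> \<alpha> w \<le> gamma_kappa \<kappa> \<mu> \<alpha> \<nu>)"
    then have w0: "0 \<le> w"
      by simp
    then have "\<forall>v\<ge>0. ?H w \<le> ?H v"
      using w by (simp add: gamma[OF w0] gamma)
    then show "w = v0"
      using sum_min_unique[OF \<kappa> mu_domain_nonempty[OF \<mu>] v0 w0 _ v0_fin] by simp
  qed
qed

text \<open>Case (ii): the minimiser is not at 0, because of the infinite slope of kappa_part there.\<close>

lemma gamma_kappa_minimizer_positive:
  assumes \<kappa>: "8/3 < \<kappa>" "\<kappa> < 8" and \<mu>: "prob_space \<mu>" "sets \<mu> = sets borel"
    and v1: "0 < v1" "mu_part \<mu> \<alpha> v1 \<noteq> \<infinity>"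
    and min: "0 \<le> \<nu>0" "\<forall>\<nu>\<ge>0. gamma_kappa \<kappa> \<mu> \<alpha> \<nu>0 \<le> gamma_kappa \<kappa> \<mu> \<alpha> \<nu>"
  shows "0 < \<nu>0"
proof (rule ccontr)
  assume "\<not> 0 < \<nu>0"
  then have "\<nu>0 = 0"
    using min(1) by simp
  obtain v where v: "0 < v" "mu_part \<mu> \<alpha> v + kappa_part \<kappa> v < mu_part \<mu> \<alpha> 0 + kappa_part \<kappa> 0"
    using sum_min_not_at_0[OF \<kappa> mu_domain_nonempty[OF \<mu>] v1] by blast
  have fin: "\<alpha> = 0 \<or> (\<exists>v1>0. mu_part \<mu> \<alpha> v1 \<noteq> \<infinity>)"
    using v1 by blast
  have "gamma_kappa \<kappa> \<mu> \<alpha> 0 \<le> gamma_kappa \<kappa> \<mu> \<alpha> v"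
    using min(2) v(1) \<open>\<nu>0 = 0\<close> by simp
  then show False
    using v gamma_kappa_eq[OF \<kappa> \<mu> fin, of 0] gamma_kappa_eq[OF \<kappa> \<mu> fin, of v] by simp
qed

theorem theorem5p2:
  fixes \<kappa> \<alpha> :: real and \<mu> :: "real measure"
  assumes "8/3 < \<kappa>" "\<kappa> < 8"
    and "prob_space \<mu>" "sets \<mu> = sets borel"
  shows "(\<alpha> = 0 \<longrightarrow>
           (\<exists>!\<nu>0. \<nu>0 \<ge> 0 \<and> (\<forall>\<nu>\<ge>0. gamma_kappa \<kappa> \<mu> \<alpha> \<nu>0 \<le> gamma_kappa \<kappa> \<mu> \<alpha> \<nu>)))
       \<and> (((\<alpha> > 0 \<and> measure \<mu> {0<..} > 0) \<or> (\<alpha> < 0 \<and> measure \<mu> {..<0} > 0)) \<longrightarrow>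
           (\<exists>!\<nu>0. \<nu>0 \<ge> 0 \<and> (\<forall>\<nu>\<ge>0. gamma_kappa \<kappa> \<mu> \<alpha> \<nu>0 \<le> gamma_kappa \<kappa> \<mu> \<alpha> \<nu>))
           \<and> (\<forall>\<nu>0. \<nu>0 \<ge> 0 \<and> (\<forall>\<nu>\<ge>0. gamma_kappa \<kappa> \<mu> \<alpha> \<nu>0 \<le> gamma_kappa \<kappa> \<mu> \<alpha> \<nu>) \<longrightarrow> \<nu>0 > 0))
       \<and> (((\<alpha> > 0 \<and> measure \<mu> {0<..} = 0) \<or> (\<alpha> < 0 \<and> measure \<mu> {..<0} = 0)) \<longrightarrow>
           (\<forall>\<nu>\<ge>0. gamma_kappa \<kappa> \<mu> \<alpha> \<nu> = \<infinity>))"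
proof (intro conjI impI allI)
  assume "\<alpha> = 0"
  then show "\<exists>!\<nu>0. \<nu>0 \<ge> 0 \<and> (\<forall>\<nu>\<ge>0. gamma_kappa \<kappa> \<mu> \<alpha> \<nu>0 \<le> gamma_kappa \<kappa> \<mu> \<alpha> \<nu>)"
    using gamma_kappa_unique_minimizer[OF assms, where vs = 0] mu_part_alpha0_at_0[OF assms(3,4)]
      kappa_part_zero[OF assms(1,2)] by simp
next
  assume "(\<alpha> > 0 \<and> measure \<mu> {0<..} > 0) \<or> (\<alpha> < 0 \<and> measure \<mu> {..<0} > 0)"
  then obtain v1 where v1: "0 < v1" "mu_part \<mu> \<alpha> v1 \<noteq> \<infinity>"
    using mu_part_finite[OF assms(3,4)] positive_side[where P = "\<lambda>A. 0 < measure \<mu> A"] by blast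
  then show "\<exists>!\<nu>0. \<nu>0 \<ge> 0 \<and> (\<forall>\<nu>\<ge>0. gamma_kappa \<kappa> \<mu> \<alpha> \<nu>0 \<le> gamma_kappa \<kappa> \<mu> \<alpha> \<nu>)"
    using kappa_part_finite[OF assms(1,2), of v1]
    by (intro gamma_kappa_unique_minimizer[OF assms _ less_imp_le[OF v1(1)]]) auto
  fix \<nu>0 assume "\<nu>0 \<ge> 0 \<and> (\<forall>\<nu>\<ge>0. gamma_kappa \<kappa> \<mu> \<alpha> \<nu>0 \<le> gamma_kappa \<kappa> \<mu> \<alpha> \<nu>)"
  then show "\<nu>0 > 0"
    using gamma_kappa_minimizer_positive[OF assms v1] by blast
next
  fix \<nu> :: real
  assume "(\<alpha> > 0 \<and> measure \<mu> {0<..} = 0) \<or> (\<alpha> < 0 \<and> measure \<mu> {..<0} = 0)" "0 \<le> \<nu>"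
  then show "gamma_kappa \<kappa> \<mu> \<alpha> \<nu> = \<infinity>"
    using gamma_kappa_infinite[OF assms _ AE_of_null_mass[OF assms(3,4)]]
      positive_side[where P = "\<lambda>A. measure \<mu> A = 0"] by blast
qed

end
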